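(* Let $\bar F^a,\bar F^b,\bar F^c:\mathbb{R}^n\times\mathbb{R}^q\times\mathbb{R}_{>0}\to\mathbb{R}^n$ be closed-loop discrete-time models. If the pairs $(\bar F^a,\bar F^b)$ and $(\bar F^b,\bar F^c)$ are REPC, then the pair $(\bar F^a,\bar F^c)$ is REPC.
   Context: $\mathcal{K}_\infty$: continuous, strictly increasing, unbounded functions $\mathbb{R}_{\ge0}\to\mathbb{R}_{\ge0}$ vanishing at $0$. REPC: $\bar F^a$ is Robustly Equilibrium-Preserving Consistent with $\bar F^b$ (the pair $(\bar F^a,\bar F^b)$ is REPC) if there exists $\phi\in\mathcal{K}_\infty$ such that for each $M,E\ge0$ there exist constants $K=K(M,E)>0$, $T^*=T^*(M,E)>0$ and a function $\rho\in\mathcal{K}_\infty$ such that $|\bar F^a(x^a,e,T)-\bar F^b(x^b,e,T)|\le(1+KT)|x^a-x^b|+T\rho(T)(\max\{|x^a|,|x^b|\}+\phi(|e|))$ for all $|x^a|,|x^b|\le M$, $|e|\le E$ and $T\in(0,T^* )$. *)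

theory Defs
  imports "HOL-Analysis.Analysis"
begin

text \<open>Class K-infinity: continuous, strictly increasing, unbounded functions
  from the nonnegative reals to the nonnegative reals vanishing at 0.
  Only the restriction to [0,oo) is relevant.\<close>
definition Kinf :: "(real \<Rightarrow> real) set" where
  "Kinf = {\<phi>. continuous_on {0..} \<phi> \<and> strict_mono_on {0..} \<phi> \<and>
              (\<forall>s\<ge>0. \<phi> s \<ge> 0) \<and> \<phi> 0 = 0 \<and> filterlim \<phi> at_top at_top}"

text \<open>Robust Equilibrium-Preserving Consistency of Fa with Fb.
  Models are maps R^n x R^q x R_{>0} -> R^n; only T > 0 is ever used.\<close>
definition REPC ::
  "(real^'n \<Rightarrow> real^'q \<Rightarrow> real \<Rightarrow> real^'n) \<Rightarrow>
   (real^'n \<Rightarrow> real^'q \<Rightarrow> real \<Rightarrow> real^'n) \<Rightarrow> bool" where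
  "REPC Fa Fb \<longleftrightarrow>
    (\<exists>\<phi>\<in>Kinf. \<forall>M\<ge>0. \<forall>E\<ge>0. \<exists>K>0. \<exists>Tstar>0. \<exists>\<rho>\<in>Kinf.
       \<forall>xa xb e T. norm xa \<le> M \<and> norm xb \<le> M \<and> norm e \<le> E \<and> 0 < T \<and> T < Tstar \<longrightarrow>
         norm (Fa xa e T - Fb xb e T)
           \<le> (1 + K * T) * norm (xa - xb)
             + T * \<rho> T * (max (norm xa) (norm xb) + \<phi> (norm e)))"

end

theory Submission
  imports Defs
begin

text \<open>The triangle inequality through Fb xb e T splits the difference into the (a,b) estimate
  at (xa,xb) and the (b,c) estimate at the common state xb, where its Lipschitz term vanishes.
  Hence K of (a,b), the smaller T*, and the sums of the two rho's and of the two phi's witness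
  consistency of (a,c).\<close>

lemma Kinf_nonneg: "f \<in> Kinf \<Longrightarrow> s \<ge> 0 \<Longrightarrow> f s \<ge> 0"
  unfolding Kinf_def by auto

lemma Kinf_add:
  assumes "f \<in> Kinf" "g \<in> Kinf"
  shows "(\<lambda>s. f s + g s) \<in> Kinf"
proof -
  have "continuous_on {0..} (\<lambda>s. f s + g s)"
    using assms unfolding Kinf_def by (auto intro: continuous_on_add)
  moreover have "strict_mono_on {0..} (\<lambda>s. f s + g s)"
    using assms unfolding Kinf_def strict_mono_on_def by (auto intro: add_strict_mono)
  moreover have "filterlim (\<lambda>s. f s + g s) at_top at_top"
    using assms unfolding Kinf_def by (auto intro: filterlim_at_top_add_at_top)
  ultimately show ?thesis
    using assms unfolding Kinf_def by auto
qed

definition REPC_estimate ::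
  "(real^'n \<Rightarrow> real^'q \<Rightarrow> real \<Rightarrow> real^'n) \<Rightarrow> (real^'n \<Rightarrow> real^'q \<Rightarrow> real \<Rightarrow> real^'n) \<Rightarrow>
   (real \<Rightarrow> real) \<Rightarrow> real \<Rightarrow> real \<Rightarrow> real \<Rightarrow> real \<Rightarrow> (real \<Rightarrow> real) \<Rightarrow> bool" where
  "REPC_estimate Fa Fb \<phi> M E K Tstar \<rho> \<longleftrightarrow>
    (\<forall>xa xb e T. norm xa \<le> M \<and> norm xb \<le> M \<and> norm e \<le> E \<and> 0 < T \<and> T < Tstar \<longrightarrow>
       norm (Fa xa e T - Fb xb e T)
         \<le> (1 + K * T) * norm (xa - xb)
           + T * \<rho> T * (max (norm xa) (norm xb) + \<phi> (norm e)))"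

lemma REPC_iff_estimate:
  "REPC Fa Fb \<longleftrightarrow>
    (\<exists>\<phi>\<in>Kinf. \<forall>M\<ge>0. \<forall>E\<ge>0. \<exists>K>0. \<exists>Tstar>0. \<exists>\<rho>\<in>Kinf. REPC_estimate Fa Fb \<phi> M E K Tstar \<rho>)"
  unfolding REPC_def REPC_estimate_def ..

lemma REPC_estimate_trans:
  fixes Fa Fb Fc :: "real^'n \<Rightarrow> real^'q \<Rightarrow> real \<Rightarrow> real^'n"
  assumes ab: "REPC_estimate Fa Fb \<phi>1 M E K1 T1 \<rho>1"
    and bc: "REPC_estimate Fb Fc \<phi>2 M E K2 T2 \<rho>2"
    and \<phi>_nonneg: "\<And>s. s \<ge> 0 \<Longrightarrow> \<phi>1 s \<ge> 0" "\<And>s. s \<ge> 0 \<Longrightarrow> \<phi>2 s \<ge> 0"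
    and \<rho>_nonneg: "\<And>T. T > 0 \<Longrightarrow> \<rho>1 T \<ge> 0" "\<And>T. T > 0 \<Longrightarrow> \<rho>2 T \<ge> 0"
  shows "REPC_estimate Fa Fc (\<lambda>s. \<phi>1 s + \<phi>2 s) M E K1 (min T1 T2) (\<lambda>T. \<rho>1 T + \<rho>2 T)"
  unfolding REPC_estimate_def
proof (intro allI impI)
  fix xa xb :: "real^'n" and e :: "real^'q" and T :: real
  assume bounds: "norm xa \<le> M \<and> norm xb \<le> M \<and> norm e \<le> E \<and> 0 < T \<and> T < min T1 T2"
  define m where "m = max (norm xa) (norm xb)"
  define \<phi> where "\<phi> = \<phi>1 (norm e) + \<phi>2 (norm e)"
  have T: "T > 0" using bounds by simp
  have est_ab: "norm (Fa xa e T - Fb xb e T)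
      \<le> (1 + K1 * T) * norm (xa - xb) + T * \<rho>1 T * (m + \<phi>1 (norm e))"
    using ab bounds unfolding REPC_estimate_def m_def by simp
  have "norm (Fb xb e T - Fc xb e T)
      \<le> (1 + K2 * T) * norm (xb - xb) + T * \<rho>2 T * (max (norm xb) (norm xb) + \<phi>2 (norm e))"
    using bounds by (intro bc[unfolded REPC_estimate_def, rule_format]) auto
  then have est_bc: "norm (Fb xb e T - Fc xb e T) \<le> T * \<rho>2 T * (norm xb + \<phi>2 (norm e))"
    by simp
  have bound_ab: "T * \<rho>1 T * (m + \<phi>1 (norm e)) \<le> T * \<rho>1 T * (m + \<phi>)"
    using T \<rho>_nonneg \<phi>_nonneg unfolding \<phi>_def by (intro mult_left_mono) auto
  have "norm xb + \<phi>2 (norm e) \<le> m + \<phi>"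
    using \<phi>_nonneg(1)[of "norm e"] unfolding \<phi>_def m_def by simp
  then have bound_bc: "T * \<rho>2 T * (norm xb + \<phi>2 (norm e)) \<le> T * \<rho>2 T * (m + \<phi>)"
    using T \<rho>_nonneg by (intro mult_left_mono) auto
  have "norm (Fa xa e T - Fc xb e T)
      \<le> norm (Fa xa e T - Fb xb e T) + norm (Fb xb e T - Fc xb e T)"
    by (rule norm_diff_triangle_le) (rule order_refl)+
  also have "\<dots> \<le> (1 + K1 * T) * norm (xa - xb) + T * \<rho>1 T * (m + \<phi>1 (norm e))
      + T * \<rho>2 T * (norm xb + \<phi>2 (norm e))"
    using est_ab est_bc by simp
  also have "\<dots> \<le> (1 + K1 * T) * norm (xa - xb) + T * \<rho>1 T * (m + \<phi>) + T * \<rho>2 T * (m + \<phi>)"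
    using bound_ab bound_bc by simp
  also have "\<dots> = (1 + K1 * T) * norm (xa - xb) + T * (\<rho>1 T + \<rho>2 T) * (m + \<phi>)"
    by (simp add: algebra_simps)
  finally show "norm (Fa xa e T - Fc xb e T)
      \<le> (1 + K1 * T) * norm (xa - xb)
        + T * (\<rho>1 T + \<rho>2 T) * (max (norm xa) (norm xb) + (\<phi>1 (norm e) + \<phi>2 (norm e)))"
    unfolding m_def \<phi>_def .
qed

theorem proposition1:
  fixes Fa Fb Fc :: "real^'n \<Rightarrow> real^'q \<Rightarrow> real \<Rightarrow> real^'n"
  assumes "REPC Fa Fb" and "REPC Fb Fc"
  shows "REPC Fa Fc"
proof -
  obtain \<phi>1 \<phi>2 where \<phi>1: "\<phi>1 \<in> Kinf" and \<phi>2: "\<phi>2 \<in> Kinf"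
    and ab: "\<forall>M\<ge>0. \<forall>E\<ge>0. \<exists>K>0. \<exists>Tstar>0. \<exists>\<rho>\<in>Kinf. REPC_estimate Fa Fb \<phi>1 M E K Tstar \<rho>"
    and bc: "\<forall>M\<ge>0. \<forall>E\<ge>0. \<exists>K>0. \<exists>Tstar>0. \<exists>\<rho>\<in>Kinf. REPC_estimate Fb Fc \<phi>2 M E K Tstar \<rho>"
    using assms unfolding REPC_iff_estimate by blast
  have "\<exists>K>0. \<exists>Tstar>0. \<exists>\<rho>\<in>Kinf. REPC_estimate Fa Fc (\<lambda>s. \<phi>1 s + \<phi>2 s) M E K Tstar \<rho>"
    if "M \<ge> 0" "E \<ge> 0" for M E
  proof -
    obtain K1 T1 \<rho>1 K2 T2 \<rho>2 where "K1 > 0" "T1 > 0" "\<rho>1 \<in> Kinf" "T2 > 0" "\<rho>2 \<in> Kinf"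
      and "REPC_estimate Fa Fb \<phi>1 M E K1 T1 \<rho>1" "REPC_estimate Fb Fc \<phi>2 M E K2 T2 \<rho>2"
      using ab bc \<open>M \<ge> 0\<close> \<open>E \<ge> 0\<close> by meson
    then have "REPC_estimate Fa Fc (\<lambda>s. \<phi>1 s + \<phi>2 s) M E K1 (min T1 T2) (\<lambda>T. \<rho>1 T + \<rho>2 T)"
      using \<phi>1 \<phi>2 by (intro REPC_estimate_trans) (auto intro: Kinf_nonneg)
    with \<open>K1 > 0\<close> \<open>T1 > 0\<close> \<open>T2 > 0\<close> Kinf_add[OF \<open>\<rho>1 \<in> Kinf\<close> \<open>\<rho>2 \<in> Kinf\<close>]
    show ?thesis by (metis min_less_iff_conj)
  qed
  then show ?thesis
    unfolding REPC_iff_estimate using Kinf_add[OF \<phi>1 \<phi>2] by blast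
qed

end
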